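(* With $D(x)=1-2x-3x^2$, $$F(x)=\sum_{s\ge0}f(s)x^s=\frac{\big(-1+x+\sqrt{D(x)}\big)^2}{4x^2D(x)},\qquad G(x)=\sum_{s\ge0}g(s)x^s=-\frac{\big(-1+x+\sqrt{D(x)}\big)^3}{8x^2D(x)^{3/2}}.$$
   Context: For an integer $s\ge 0$, let $T_s$ be the set of positive integers not expressible as $k_1s+k_2(s+1)+k_3(s+2)$ with $k_i$ nonnegative integers, ordered by $y\ge x$ iff there is a chain $y=y_0,\ldots,y_l=x$ in $T_s$ with consecutive differences in $\{s,s+1,s+2\}$. One has $T_s=\bigcup_{k=0}^{\lfloor s/2\rfloor-1}B_k$ with $B_k=\{1+k(s+2),\ldots,(k+1)s-1\}$, and the rank function is $\rho_s(a)=k$ for $a\in B_k$. Let $J(T_s)$ be the set of order ideals of $T_s$. Define $f(s)=\sum_{I\in J(T_s)}|I|$ and $g(s)=\sum_{I\in J(T_s)}\sum_{a\in I}\rho_s(a)$. *)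

theory Defs
  imports Complex_Main
begin

definition T :: "nat \<Rightarrow> nat set" where
  "T s = {n. 0 < n \<and> \<not> (\<exists>k1 k2 k3. n = k1 * s + k2 * (s + 1) + k3 * (s + 2))}"

definition step :: "nat \<Rightarrow> nat \<Rightarrow> nat \<Rightarrow> bool" where
  "step s y x \<longleftrightarrow> y \<in> T s \<and> x \<in> T s \<and> x \<le> y \<and> y - x \<in> {s, s + 1, s + 2}"

definition leqT :: "nat \<Rightarrow> nat \<Rightarrow> nat \<Rightarrow> bool" where
  "leqT s x y \<longleftrightarrow> x \<in> T s \<and> y \<in> T s \<and> (step s)\<^sup>*\<^sup>* y x"

definition J :: "nat \<Rightarrow> nat set set" where
  "J s = {I. I \<subseteq> T s \<and> (\<forall>y\<in>I. \<forall>x. leqT s x y \<longrightarrow> x \<in> I)}"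

definition B :: "nat \<Rightarrow> nat \<Rightarrow> nat set" where
  "B s k = {1 + k * (s + 2) .. (k + 1) * s - 1}"

definition rho :: "nat \<Rightarrow> nat \<Rightarrow> nat" where
  "rho s a = (THE k. k < s div 2 \<and> a \<in> B s k)"

definition f :: "nat \<Rightarrow> nat" where
  "f s = (\<Sum>I\<in>J s. card I)"

definition g :: "nat \<Rightarrow> nat" where
  "g s = (\<Sum>I\<in>J s. \<Sum>a\<in>I. rho s a)"

definition D :: "real \<Rightarrow> real" where
  "D x = 1 - 2 * x - 3 * x^2"

end

theory Submission
  imports Defs "HOL-Analysis.FPS_Convergence"
begin

(*
  The gaps T s of the numerical semigroup generated by s, s+1, s+2, ordered by
  covering steps, are counted via Motzkin paths, and the sums f and g become
  coefficients of algebraic power series.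

  1. Writing n = k (s+1) + c, the gap set is the triangle k < c, k + c < s on the
     grid of (height k, column c); the rank is the height, and a covering step
     goes one level down and moves the column by at most one.
  2. Hence an order ideal is determined by its column heights, which form a
     Motzkin path of length s: J s is in bijection with Walks s 0.
  3. Splitting a path at column c shows that rank-weighted ideal sizes are
     convolutions of walk counts (ideal_sum_formula).
  4. With the Motzkin series M = 1 + X M + X^2 M^2, walks to height h have
     generating function X^h M^(h+1), so with Y = (X M)^2 the series F and G
     satisfy (1-Y)^2 F = M^2 Y and (1-Y)^3 G = M^2 Y^2.
  5. All series converge for |x| < 1/3 (coefficients are O(n^4 3^n)); evaluating,
     sqrt (D x) = 1 - x - 2x^2 M(x) and 1 - x^2 M(x)^2 = M(x) sqrt (D x) give the
     closed forms of the main theorem.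
*)

unbundle no vec_syntax
unbundle fps_syntax

section \<open>The numerical semigroup gaps \<open>T s\<close> on the grid of residues\<close>

text \<open>Writing \<open>n = k * (s + 1) + c\<close> with \<open>c \<le> s\<close>, the gap set \<open>T s\<close> is the triangle
  \<open>k < c\<close>, \<open>k + c < s\<close>: the sums of \<open>k + 1\<close> generators fill exactly the interval
  \<open>[(k+1) s, (k+1)(s+2)]\<close>.\<close>

lemma sum_of_generators_iff:
  assumes n: "n = k * Suc s + c" and cs: "c \<le> s"
  shows "(\<exists>k1 k2 k3. n = k1 * s + k2 * (s + 1) + k3 * (s + 2)) \<longleftrightarrow> c \<le> k \<or> s \<le> k + c"
proof
  assume "\<exists>k1 k2 k3. n = k1 * s + k2 * (s + 1) + k3 * (s + 2)"
  then obtain k1 k2 k3 where e: "n = k1 * s + k2 * (s + 1) + k3 * (s + 2)" by blast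
  \<comment> \<open>a sum of \<open>m\<close> generators lies in \<open>[m s, m s + 2 m]\<close>\<close>
  define m where "m = k1 + k2 + k3"
  have e2: "n = m * s + k2 + 2 * k3" unfolding e m_def by (simp add: algebra_simps)
  show "c \<le> k \<or> s \<le> k + c"
  proof (cases "m \<le> k")
    case True
    have "m * s \<le> k * s" using True by simp
    moreover have "k2 + 2 * k3 \<le> 2 * m" unfolding m_def by simp
    ultimately have "n \<le> k * s + 2 * k" using e2 True by linarith
    then show ?thesis using n by simp
  next
    case False
    then have "(k + 1) * s \<le> m * s" by (intro mult_le_mono1) simp
    then show ?thesis using e2 n by (simp add: algebra_simps)
  qed
next
  assume "c \<le> k \<or> s \<le> k + c"
  then show "\<exists>k1 k2 k3. n = k1 * s + k2 * (s + 1) + k3 * (s + 2)"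
  proof
    assume "c \<le> k"
    then obtain e where "k = c + e" using le_Suc_ex by blast
    then have "n = 0 * s + e * (s + 1) + c * (s + 2)"
      unfolding n by (simp add: algebra_simps)
    then show ?thesis by blast
  next
    assume "s \<le> k + c"
    \<comment> \<open>\<open>n + d = (k + 1)(s + 1)\<close> with \<open>d = s + 1 - c \<le> k + 1\<close>\<close>
    define d where "d = Suc s - c"
    obtain e where ke: "k + 1 = d + e" using \<open>s \<le> k + c\<close> le_Suc_ex unfolding d_def by fastforce
    have "n + d = (k + 1) * (s + 1)" unfolding n d_def using cs by (simp add: algebra_simps)
    also have "\<dots> = d * s + d + e * (s + 1)" unfolding ke by (simp add: algebra_simps)
    finally have "n = d * s + e * (s + 1) + 0 * (s + 2)" by simp
    then show ?thesis by blast
  qed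
qed

lemma T_iff_div_mod:
  "n \<in> T s \<longleftrightarrow> n div Suc s < n mod Suc s \<and> n div Suc s + n mod Suc s < s"
proof -
  define k where "k = n div Suc s"
  define c where "c = n mod Suc s"
  have n: "n = k * Suc s + c" unfolding k_def c_def by (metis div_mult_mod_eq)
  have cs: "c \<le> s" unfolding c_def using mod_less_divisor[of "Suc s" n] by linarith
  have "0 < n \<longleftrightarrow> 0 < k \<or> 0 < c" unfolding n by auto
  then show ?thesis using sum_of_generators_iff[OF n cs]
    unfolding T_def k_def[symmetric] c_def[symmetric] by auto
qed

lemma grid_div_mod:
  assumes "c < Suc s"
  shows "(k * Suc s + c) div Suc s = k" "(k * Suc s + c) mod Suc s = c"
proof -
  have "k * Suc s + c = c + k * Suc s" by (simp only: add.commute)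
  then show "(k * Suc s + c) div Suc s = k" "(k * Suc s + c) mod Suc s = c"
    using assms by (simp_all only: div_mult_self1 mod_mult_self1) simp_all
qed

lemma T_grid_iff: "c < Suc s \<Longrightarrow> k * Suc s + c \<in> T s \<longleftrightarrow> k < c \<and> k + c < s"
  by (simp only: T_iff_div_mod grid_div_mod)

lemma T_grid_cases:
  assumes "a \<in> T s"
  obtains k c where "a = k * Suc s + c" "k < c" "k + c < s"
  using assms T_iff_div_mod[of a s] by (metis div_mult_mod_eq)

lemma rho_eq_div:
  assumes "a \<in> T s"
  shows "rho s a = a div Suc s"
proof -
  obtain k c where a: "a = k * Suc s + c" "k < c" "k + c < s" using T_grid_cases[OF assms] .
  have in_block: "a \<in> B s k" unfolding B_def using a by (auto simp: algebra_simps)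
  have block_height: "b div Suc s = j" if "b \<in> B s j" for b j
  proof -
    from that have "Suc s * j \<le> b" "b < Suc s * Suc j" by (auto simp: B_def algebra_simps)
    then show ?thesis by (rule div_nat_eqI)
  qed
  show ?thesis unfolding rho_def
  proof (rule the_equality)
    show "a div Suc s < s div 2 \<and> a \<in> B s (a div Suc s)"
      using a in_block block_height by auto
  qed (use block_height in auto)
qed

section \<open>Covering relations and order ideals\<close>

definition adjacent :: "nat \<Rightarrow> nat \<Rightarrow> bool" where
  "adjacent a b \<longleftrightarrow> b \<le> a + 1 \<and> a \<le> b + 1"

lemma adjacent_sym: "adjacent a b \<longleftrightarrow> adjacent b a"
  unfolding adjacent_def by auto

lemma step_grid:
  assumes "step s y x"
  shows "y div Suc s = Suc (x div Suc s)" "adjacent (x mod Suc s) (y mod Suc s)"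
proof -
  from assms have xT: "x \<in> T s" and xy: "x \<le> y" and d: "y - x \<in> {s, s+1, s+2}"
    unfolding step_def by auto
  obtain k c where x: "x = k * Suc s + c" "k < c" "k + c < s" using T_grid_cases[OF xT] .
  have "y = Suc k * Suc s + (c - 1) \<or> y = Suc k * Suc s + c \<or> y = Suc k * Suc s + (c + 1)"
    using d xy x by (auto simp: algebra_simps)
  moreover define c' where "c' = y - Suc k * Suc s"
  ultimately have y: "y = Suc k * Suc s + c'" and "adjacent c c'"
    using x by (auto simp: adjacent_def)
  moreover have "c < Suc s" "c' < Suc s" using x y \<open>adjacent c c'\<close> by (auto simp: adjacent_def)
  ultimately show "y div Suc s = Suc (x div Suc s)" "adjacent (x mod Suc s) (y mod Suc s)"
    unfolding x(1) by (simp_all only: grid_div_mod)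
qed

lemma step_grid_intro:
  assumes "k * Suc s + c \<in> T s" "Suc k * Suc s + c' \<in> T s" "adjacent c c'" "c < Suc s"
  shows "step s (Suc k * Suc s + c') (k * Suc s + c)"
proof -
  have "0 < c" using assms(1) T_grid_iff[OF assms(4)] by auto
  then show ?thesis using assms unfolding step_def adjacent_def by (auto simp: algebra_simps)
qed

lemma J_iff_step_closed: "I \<in> J s \<longleftrightarrow> I \<subseteq> T s \<and> (\<forall>y\<in>I. \<forall>x. step s y x \<longrightarrow> x \<in> I)"
proof
  assume "I \<in> J s"
  then show "I \<subseteq> T s \<and> (\<forall>y\<in>I. \<forall>x. step s y x \<longrightarrow> x \<in> I)"
    unfolding J_def leqT_def step_def by auto
next
  assume I: "I \<subseteq> T s \<and> (\<forall>y\<in>I. \<forall>x. step s y x \<longrightarrow> x \<in> I)"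
  have "(step s)\<^sup>*\<^sup>* y x \<Longrightarrow> y \<in> I \<Longrightarrow> x \<in> I" for x y
    by (induction rule: rtranclp_induct) (use I in auto)
  then show "I \<in> J s" unfolding J_def leqT_def using I by auto
qed

section \<open>Motzkin walks\<close>

text \<open>\<open>Walks n k\<close>: walks of length \<open>n\<close> in the naturals with steps in \<open>{-1, 0, 1}\<close>, from
  height \<open>0\<close> to height \<open>k\<close>, represented by the list of their \<open>n + 1\<close> heights.
  \<open>Walks n 0\<close> are the Motzkin paths of length \<open>n\<close>.\<close>

definition Walks :: "nat \<Rightarrow> nat \<Rightarrow> nat list set" where
  "Walks n k = {xs. length xs = Suc n \<and> successively adjacent xs \<and> hd xs = 0 \<and> last xs = k}"

definition walk_count :: "nat \<Rightarrow> nat \<Rightarrow> nat" where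
  "walk_count n k = card (Walks n k)"

lemma successively_adjacent_rev: "successively adjacent (rev xs) \<longleftrightarrow> successively adjacent xs"
proof -
  have "(\<lambda>x y. adjacent y x) = adjacent" using adjacent_sym by blast
  then show ?thesis unfolding successively_rev by metis
qed

lemma Motzkin_rev:
  assumes "xs \<in> Walks n 0"
  shows "rev xs \<in> Walks n 0"
proof -
  have "xs \<noteq> []" using assms by (auto simp: Walks_def)
  then show ?thesis using assms
    by (simp add: Walks_def successively_adjacent_rev hd_rev last_rev del: successively_rev)
qed

lemma Walks_nth_le:
  assumes "xs \<in> Walks n k" "i \<le> n"
  shows "xs ! i \<le> i"
  using assms(2)
proof (induction i)
  case 0
  then show ?case using assms(1) unfolding Walks_def by (cases xs) auto
next
  case (Suc i)
  then have "adjacent (xs ! i) (xs ! Suc i)"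
    using assms(1) successively_nth[of adjacent xs i] by (auto simp: Walks_def)
  then show ?case using Suc by (auto simp: adjacent_def)
qed

lemma Motzkin_nth_le:
  assumes "xs \<in> Walks n 0" "i \<le> n"
  shows "xs ! i \<le> i" "xs ! i \<le> n - i"
proof -
  show "xs ! i \<le> i" using Walks_nth_le[OF assms] .
  have "length xs = Suc n" using assms(1) by (simp add: Walks_def)
  then have "xs ! i = rev xs ! (n - i)" using assms(2) by (simp add: rev_nth)
  then show "xs ! i \<le> n - i" using Walks_nth_le[OF Motzkin_rev[OF assms(1)]] by simp
qed

lemma Walks_0: "Walks 0 k = (if k = 0 then {[0]} else {})"
proof -
  have "xs \<in> Walks 0 k \<longleftrightarrow> xs = [0] \<and> k = 0" for xs
    unfolding Walks_def by (cases xs) auto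
  then show ?thesis by auto
qed

lemma Walks_Suc: "Walks (Suc n) k = (\<Union>k'\<in>{k-1..k+1}. (\<lambda>xs. xs @ [k]) ` Walks n k')"
proof (intro equalityI subsetI)
  fix ys assume ys: "ys \<in> Walks (Suc n) k"
  then have len: "length ys = Suc (Suc n)" by (simp add: Walks_def)
  define xs where "xs = butlast ys"
  have "ys = butlast ys @ [last ys]" using len by (intro append_butlast_last_id[symmetric]) auto
  moreover have "last ys = k" using ys by (simp add: Walks_def)
  ultimately have ysx: "ys = xs @ [k]" unfolding xs_def by metis
  have xne: "xs \<noteq> []" using len unfolding ysx by auto
  have "successively adjacent (xs @ [k])" using ys ysx unfolding Walks_def by auto
  then have "adjacent (last xs) k" and "successively adjacent xs" using xne
    by (auto simp: successively_append_iff)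
  then have "xs \<in> Walks n (last xs)" "last xs \<in> {k-1..k+1}"
    using ys ysx xne len unfolding Walks_def adjacent_def by auto
  then show "ys \<in> (\<Union>k'\<in>{k-1..k+1}. (\<lambda>xs. xs @ [k]) ` Walks n k')"
    using ysx by blast
next
  fix ys assume "ys \<in> (\<Union>k'\<in>{k-1..k+1}. (\<lambda>xs. xs @ [k]) ` Walks n k')"
  then obtain k' xs where k': "k' \<in> {k-1..k+1}" and xs: "xs \<in> Walks n k'" and ys: "ys = xs @ [k]"
    by blast
  have "xs \<noteq> []" using xs unfolding Walks_def by auto
  moreover have "adjacent k' k" using k' unfolding adjacent_def by auto
  ultimately show "ys \<in> Walks (Suc n) k" using xs unfolding ys Walks_def
    by (auto simp: successively_append_iff)
qed

lemma finite_Walks: "finite (Walks n k)"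
  by (induction n arbitrary: k) (simp_all add: Walks_0 Walks_Suc)

lemma walk_count_0: "walk_count 0 k = (if k = 0 then 1 else 0)"
  by (simp add: walk_count_def Walks_0)

lemma walk_count_Suc: "walk_count (Suc n) k = (\<Sum>k'\<in>{k-1..k+1}. walk_count n k')"
proof -
  have "walk_count (Suc n) k = card (\<Union>k'\<in>{k-1..k+1}. (\<lambda>xs. xs @ [k]) ` Walks n k')"
    by (simp add: walk_count_def Walks_Suc)
  also have "\<dots> = (\<Sum>k'\<in>{k-1..k+1}. card ((\<lambda>xs. xs @ [k]) ` Walks n k'))"
  proof (rule card_UN_disjoint)
    show "\<forall>i\<in>{k-1..k+1}. \<forall>j\<in>{k-1..k+1}. i \<noteq> j \<longrightarrow>
      (\<lambda>xs. xs @ [k]) ` Walks n i \<inter> (\<lambda>xs. xs @ [k]) ` Walks n j = {}"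
      unfolding Walks_def by (auto simp del: successively.simps)
  qed (simp_all add: finite_Walks)
  also have "\<dots> = (\<Sum>k'\<in>{k-1..k+1}. walk_count n k')"
    unfolding walk_count_def by (intro sum.cong refl card_image) (auto simp: inj_on_def)
  finally show ?thesis .
qed

lemma walk_count_Suc_0: "walk_count (Suc n) 0 = walk_count n 0 + walk_count n 1"
proof -
  have "{0 - 1..0 + 1} = {0::nat, 1}" by auto
  then show ?thesis by (simp add: walk_count_Suc)
qed

lemma walk_count_Suc_Suc:
  "walk_count (Suc n) (Suc j) = walk_count n j + walk_count n (Suc j) + walk_count n (Suc (Suc j))"
proof -
  have "{Suc j - 1..Suc j + 1} = {j, Suc j, Suc (Suc j)}" by auto
  then show ?thesis by (simp add: walk_count_Suc)
qed

text \<open>There are at most three choices for each step.\<close>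

lemma walk_count_le: "walk_count n k \<le> 3 ^ n"
proof (induction n arbitrary: k)
  case (Suc n)
  have "walk_count (Suc n) k \<le> card {k-1..k+1} * 3 ^ n"
    unfolding walk_count_Suc using sum_bounded_above[of "{k-1..k+1}" "walk_count n" "3^n"] Suc by simp
  also have "\<dots> \<le> 3 * 3 ^ n" by (intro mult_le_mono1) simp
  finally show ?case by simp
qed (simp add: walk_count_0)

section \<open>Order ideals of \<open>T s\<close> are Motzkin paths of length \<open>s\<close>\<close>

text \<open>An ideal is determined by its column heights: in column \<open>c\<close> it contains the grid
  points of height below \<open>xs ! c\<close>.  Closure under covering steps says that heights of
  neighbouring columns differ by at most one, and the triangle shape of \<open>T s\<close> forces the
  heights of the columns \<open>0\<close> and \<open>s\<close> to vanish.\<close>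

definition ideal_of_walk :: "nat \<Rightarrow> nat list \<Rightarrow> nat set" where
  "ideal_of_walk s xs = {a \<in> T s. a div Suc s < xs ! (a mod Suc s)}"

definition walk_of_ideal :: "nat \<Rightarrow> nat set \<Rightarrow> nat list" where
  "walk_of_ideal s I = map (\<lambda>c. LEAST k. k * Suc s + c \<notin> I) [0..<Suc s]"

text \<open>Below a Motzkin path every grid point is a gap.\<close>

lemma mem_ideal_of_walk:
  assumes "xs \<in> Walks s 0" "c < Suc s"
  shows "k * Suc s + c \<in> ideal_of_walk s xs \<longleftrightarrow> k < xs ! c"
proof -
  have "xs ! c \<le> c" "xs ! c \<le> s - c" using Motzkin_nth_le[OF assms(1)] assms(2) by auto
  then show ?thesis unfolding ideal_of_walk_def using T_grid_iff[OF assms(2)] grid_div_mod[OF assms(2)]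
    by auto
qed

lemma sum_ideal_of_walk:
  assumes "xs \<in> Walks s 0"
  shows "(\<Sum>a\<in>ideal_of_walk s xs. \<phi> a) = (\<Sum>c<Suc s. \<Sum>k<xs!c. \<phi> (k * Suc s + c))"
proof -
  let ?A = "SIGMA c:{..<Suc s}. {..<xs!c}"
  let ?pt = "\<lambda>(c,k). k * Suc s + c"
  have "ideal_of_walk s xs = ?pt ` ?A"
  proof (intro equalityI subsetI)
    fix a assume "a \<in> ideal_of_walk s xs"
    then have "(a mod Suc s, a div Suc s) \<in> ?A" unfolding ideal_of_walk_def by auto
    moreover have "a = (a div Suc s) * Suc s + a mod Suc s" by (rule div_mult_mod_eq[symmetric])
    ultimately show "a \<in> ?pt ` ?A" by force
  qed (use mem_ideal_of_walk[OF assms] in auto)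
  moreover have "inj_on ?pt ?A"
  proof (rule inj_onI)
    fix u v assume u: "u \<in> ?A" and v: "v \<in> ?A" and e: "?pt u = ?pt v"
    obtain c k c' k' where [simp]: "u = (c, k)" "v = (c', k')" by fastforce
    have "c < Suc s" "c' < Suc s" using u v by auto
    then show "u = v" using e grid_div_mod by (metis \<open>u = (c, k)\<close> \<open>v = (c', k')\<close> case_prod_conv)
  qed
  ultimately have "(\<Sum>a\<in>ideal_of_walk s xs. \<phi> a) = (\<Sum>(c,k)\<in>?A. \<phi> (k * Suc s + c))"
    by (simp add: sum.reindex case_prod_unfold)
  also have "\<dots> = (\<Sum>c<Suc s. \<Sum>k<xs!c. \<phi> (k * Suc s + c))"
    by (rule sum.Sigma[symmetric]) auto
  finally show ?thesis .
qed

lemma Walks_nth_adjacent: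
  assumes "xs \<in> Walks n k" "i \<le> n" "j \<le> n" "adjacent i j"
  shows "adjacent (xs ! i) (xs ! j)"
proof -
  have len: "length xs = Suc n" and sx: "successively adjacent xs"
    using assms(1) by (auto simp: Walks_def)
  consider "j = i" | "j = Suc i" | "i = Suc j" using assms(4) unfolding adjacent_def by linarith
  then show ?thesis
  proof cases
    case 2 then show ?thesis using successively_nth[OF sx, of i] len assms(3) by auto
  next
    case 3 then show ?thesis using successively_nth[OF sx, of j] len assms(2) adjacent_sym by auto
  qed (auto simp: adjacent_def)
qed

lemma ideal_of_walk_in_J:
  assumes "xs \<in> Walks s 0"
  shows "ideal_of_walk s xs \<in> J s"
  unfolding J_iff_step_closed
proof (intro conjI ballI allI impI)
  show "ideal_of_walk s xs \<subseteq> T s" unfolding ideal_of_walk_def by auto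
  fix y x assume y: "y \<in> ideal_of_walk s xs" and st: "step s y x"
  have "y mod Suc s \<le> s" "x mod Suc s \<le> s" using less_Suc_eq_le by auto
  then have "adjacent (xs ! (x mod Suc s)) (xs ! (y mod Suc s))"
    using Walks_nth_adjacent[OF assms] step_grid(2)[OF st] by blast
  moreover have "y div Suc s < xs ! (y mod Suc s)" using y by (simp add: ideal_of_walk_def)
  ultimately have "x div Suc s < xs ! (x mod Suc s)"
    using step_grid(1)[OF st] unfolding adjacent_def by linarith
  then show "x \<in> ideal_of_walk s xs" using st unfolding ideal_of_walk_def step_def by blast
qed

lemma ideal_column_down:
  assumes I: "I \<in> J s" and c: "c < Suc s" and jk: "j \<le> k"
  shows "k * Suc s + c \<in> I \<Longrightarrow> j * Suc s + c \<in> I"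
  using jk
proof (induction k rule: dec_induct)
  case (step k)
  have IT: "I \<subseteq> T s" and closed: "\<forall>y\<in>I. \<forall>x. step s y x \<longrightarrow> x \<in> I"
    using I J_iff_step_closed by auto
  have "Suc k * Suc s + c \<in> T s" using step.prems IT by auto
  then have "k * Suc s + c \<in> T s" unfolding T_grid_iff[OF c] by linarith
  then have "step s (Suc k * Suc s + c) (k * Suc s + c)"
    using step.prems IT c by (intro step_grid_intro) (auto simp: adjacent_def)
  then show ?case using closed step by blast
qed

lemma ideal_column_height:
  assumes I: "I \<in> J s" and c: "c < Suc s"
  shows "k * Suc s + c \<in> I \<longleftrightarrow> k < (LEAST k. k * Suc s + c \<notin> I)"
proof -
  have "c * Suc s + c \<notin> I" using I T_grid_iff[OF c, of c] by (auto simp: J_def)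
  then have least: "(LEAST k. k * Suc s + c \<notin> I) * Suc s + c \<notin> I" by (rule LeastI)
  show ?thesis
  proof
    assume "k * Suc s + c \<in> I"
    then show "k < (LEAST k. k * Suc s + c \<notin> I)"
      using ideal_column_down[OF I c] least by (meson not_less)
  qed (use not_less_Least in blast)
qed

lemma ideal_heights_adjacent:
  assumes I: "I \<in> J s" and c: "c < Suc s" "c' < Suc s" "adjacent c c'"
  shows "(LEAST k. k * Suc s + c' \<notin> I) \<le> (LEAST k. k * Suc s + c \<notin> I) + 1"
proof (rule ccontr)
  define h where "h = (LEAST k. k * Suc s + c \<notin> I)"
  have IT: "I \<subseteq> T s" and closed: "\<forall>y\<in>I. \<forall>x. step s y x \<longrightarrow> x \<in> I"
    using I J_iff_step_closed by auto
  assume "\<not> (LEAST k. k * Suc s + c' \<notin> I) \<le> h + 1"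
  then have "Suc h < (LEAST k. k * Suc s + c' \<notin> I)" by linarith
  then have aI: "Suc h * Suc s + c' \<in> I" using ideal_column_height[OF I c(2), of "Suc h"] by blast
  then have aT: "Suc h * Suc s + c' \<in> T s" using IT by blast
  then have "Suc h < c' \<and> Suc h + c' < s" using T_grid_iff[OF c(2)] by blast
  then have "h < c \<and> h + c < s" using c(3) unfolding adjacent_def by linarith
  then have "h * Suc s + c \<in> T s" using T_grid_iff[OF c(1)] by blast
  then have "step s (Suc h * Suc s + c') (h * Suc s + c)" using step_grid_intro aT c(3,1) by blast
  then have "h * Suc s + c \<in> I" using closed aI by blast
  then show False using ideal_column_height[OF I c(1), of h] less_irrefl unfolding h_def by blast
qed

lemma walk_of_ideal_in_Walks:
  assumes I: "I \<in> J s"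
  shows "walk_of_ideal s I \<in> Walks s 0"
proof -
  define h where "h c = (LEAST k. k * Suc s + c \<notin> I)" for c
  have IT: "I \<subseteq> T s" using I J_iff_step_closed by auto
  have h_end: "h c = 0" if "c = 0 \<or> c = s" for c
  proof -
    have "0 * Suc s + c \<notin> I" using IT T_grid_iff[of c s 0] that by auto
    then show ?thesis unfolding h_def by (intro Least_equality) auto
  qed
  have "successively adjacent (map h [0..<Suc s])"
    unfolding successively_conv_nth
  proof (intro allI impI)
    fix i assume "Suc i < length (map h [0..<Suc s])"
    then have i: "i < Suc s" "Suc i < Suc s" by simp_all
    have "adjacent i (Suc i)" "adjacent (Suc i) i" by (simp_all add: adjacent_def)
    then have "h (Suc i) \<le> h i + 1" "h i \<le> h (Suc i) + 1"
      unfolding h_def using ideal_heights_adjacent[OF I] i by blast+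
    then have "adjacent (h i) (h (Suc i))" unfolding adjacent_def by blast
    then show "adjacent (map h [0..<Suc s] ! i) (map h [0..<Suc s] ! Suc i)"
      using i by (simp del: upt_Suc)
  qed
  moreover have "hd (map h [0..<Suc s]) = 0" using h_end by (simp add: upt_conv_Cons del: upt_Suc)
  moreover have "last (map h [0..<Suc s]) = 0" using h_end by (simp add: last_map)
  ultimately show ?thesis unfolding walk_of_ideal_def h_def Walks_def by simp
qed

lemma walk_of_ideal_of_walk:
  assumes "xs \<in> Walks s 0"
  shows "walk_of_ideal s (ideal_of_walk s xs) = xs"
proof (rule nth_equalityI)
  show "length (walk_of_ideal s (ideal_of_walk s xs)) = length xs"
    using assms by (simp add: walk_of_ideal_def Walks_def)
  fix c assume "c < length (walk_of_ideal s (ideal_of_walk s xs))"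
  then have c: "c < Suc s" by (simp add: walk_of_ideal_def)
  have "(LEAST k. k * Suc s + c \<notin> ideal_of_walk s xs) = xs ! c"
  proof (rule Least_equality)
    show "xs ! c * Suc s + c \<notin> ideal_of_walk s xs" using mem_ideal_of_walk[OF assms c] by blast
    fix k assume "k * Suc s + c \<notin> ideal_of_walk s xs"
    then show "xs ! c \<le> k" using mem_ideal_of_walk[OF assms c, of k] by simp
  qed
  then show "walk_of_ideal s (ideal_of_walk s xs) ! c = xs ! c"
    using c by (simp add: walk_of_ideal_def del: upt_Suc)
qed

lemma ideal_of_walk_of_ideal:
  assumes I: "I \<in> J s"
  shows "ideal_of_walk s (walk_of_ideal s I) = I"
proof -
  have "a \<in> ideal_of_walk s (walk_of_ideal s I) \<longleftrightarrow> a \<in> I" for a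
  proof -
    define k c where "k = a div Suc s" and "c = a mod Suc s"
    have c: "c < Suc s" unfolding c_def by simp
    have a: "a = k * Suc s + c" unfolding k_def c_def by (rule div_mult_mod_eq[symmetric])
    have "walk_of_ideal s I ! c = (LEAST k. k * Suc s + c \<notin> I)"
      using c by (simp add: walk_of_ideal_def del: upt_Suc)
    then have "a \<in> ideal_of_walk s (walk_of_ideal s I) \<longleftrightarrow> a \<in> T s \<and> k * Suc s + c \<in> I"
      using ideal_column_height[OF I c, of k] unfolding ideal_of_walk_def k_def c_def by auto
    then have "a \<in> ideal_of_walk s (walk_of_ideal s I) \<longleftrightarrow> a \<in> T s \<and> a \<in> I"
      unfolding a .
    then show ?thesis using I by (auto simp: J_def)
  qed
  then show ?thesis by auto
qed

lemma bij_ideal_of_walk: "bij_betw (ideal_of_walk s) (Walks s 0) (J s)"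
  by (rule bij_betw_byWitness[where f' = "walk_of_ideal s"])
    (use walk_of_ideal_of_walk ideal_of_walk_of_ideal ideal_of_walk_in_J walk_of_ideal_in_Walks in auto)

lemma ideal_sum_as_walk_sum:
  "(\<Sum>I\<in>J s. \<Sum>a\<in>I. w (rho s a)) = (\<Sum>xs\<in>Walks s 0. \<Sum>c<Suc s. \<Sum>k<xs ! c. w k)"
proof -
  have "(\<Sum>I\<in>J s. \<Sum>a\<in>I. w (rho s a)) = (\<Sum>xs\<in>Walks s 0. \<Sum>a\<in>ideal_of_walk s xs. w (rho s a))"
    by (rule sum.reindex_bij_betw[OF bij_ideal_of_walk, symmetric])
  also have "\<dots> = (\<Sum>xs\<in>Walks s 0. \<Sum>c<Suc s. \<Sum>k<xs ! c. w k)"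
  proof (rule sum.cong[OF refl])
    fix xs assume xs: "xs \<in> Walks s 0"
    have "rho s (k * Suc s + c) = k" if c: "c < Suc s" and "k < xs ! c" for c k
    proof -
      have "k * Suc s + c \<in> T s"
        using mem_ideal_of_walk[OF xs c] that unfolding ideal_of_walk_def by blast
      then show ?thesis using rho_eq_div grid_div_mod(1)[OF c] by simp
    qed
    then show "(\<Sum>a\<in>ideal_of_walk s xs. w (rho s a)) = (\<Sum>c<Suc s. \<Sum>k<xs ! c. w k)"
      unfolding sum_ideal_of_walk[OF xs] by (intro sum.cong refl) auto
  qed
  finally show ?thesis .
qed

section \<open>Splitting a Motzkin path at a column\<close>

text \<open>A Motzkin path of length \<open>s\<close> passing through height \<open>k\<close> at column \<open>c\<close> is a walk of
  length \<open>c\<close> from \<open>0\<close> to \<open>k\<close> followed by the reverse of a walk of length \<open>s - c\<close> from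
  \<open>0\<close> to \<open>k\<close>.\<close>

lemma successively_take: "successively P xs \<Longrightarrow> successively P (take n xs)"
  by (metis append_take_drop_id successively_append_iff)

lemma successively_drop: "successively P xs \<Longrightarrow> successively P (drop n xs)"
  by (metis append_take_drop_id successively_append_iff)

lemma Walks_rev_Cons: "b \<in> Walks m k \<Longrightarrow> rev b = k # tl (rev b)"
  unfolding Walks_def by (cases b rule: rev_cases) auto

lemma Walks_take:
  assumes "xs \<in> Walks s 0" "c \<le> s"
  shows "take (Suc c) xs \<in> Walks c (xs ! c)"
proof -
  have "c < length xs" using assms by (simp add: Walks_def)
  then have "last (take (Suc c) xs) = xs ! c" by (simp add: take_Suc_conv_app_nth)
  then show ?thesis using assms unfolding Walks_def by (auto simp: min_def successively_take)
qed

lemma Walks_drop: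
  assumes "xs \<in> Walks s 0" "c \<le> s"
  shows "rev (drop c xs) \<in> Walks (s - c) (xs ! c)"
proof -
  have c: "c < length xs" and len: "length xs = Suc s" using assms by (simp_all add: Walks_def)
  have "successively adjacent (drop c xs)"
    using assms(1) by (simp add: Walks_def successively_drop)
  moreover have "hd (drop c xs) = xs ! c" "last (drop c xs) = 0" "drop c xs \<noteq> []"
    using c assms(1) by (simp_all add: hd_drop_conv_nth Walks_def)
  ultimately show ?thesis
    using len assms(2) unfolding Walks_def
    by (simp add: successively_adjacent_rev hd_rev last_rev Suc_diff_le del: successively_rev)
qed

lemma Walks_glue:
  assumes a: "a \<in> Walks c k" and b: "b \<in> Walks m k"
  shows "a @ tl (rev b) \<in> Walks (c + m) 0" "(a @ tl (rev b)) ! c = k"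
proof -
  have la: "length a = Suc c" and lasta: "last a = k" and sa: "successively adjacent a"
    and ha: "hd a = 0" using a by (auto simp: Walks_def)
  have lb: "length b = Suc m" and sb: "successively adjacent b" and hb: "hd b = 0"
    using b by (auto simp: Walks_def)
  have rb: "rev b = k # tl (rev b)" using Walks_rev_Cons[OF b] .
  define t where "t = tl (rev b)"
  have ane: "a \<noteq> []" using la by auto
  have "successively adjacent (k # t)"
    using sb rb unfolding t_def by (metis successively_adjacent_rev)
  then have "successively adjacent (a @ t)"
    using sa ane lasta by (auto simp: successively_append_iff successively_Cons)
  moreover have "last (a @ t) = 0"
  proof (cases "t = []")
    case True
    then have "b = [k]" using rb by (metis rev_singleton_conv t_def)
    then show ?thesis using True lasta hb by simp
  next
    case False
    then have "last (a @ t) = last (rev b)" using rb unfolding t_def by (metis last_ConsR last_appendR)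
    also have "\<dots> = 0" using hb lb by (simp add: last_rev)
    finally show ?thesis .
  qed
  ultimately show "a @ tl (rev b) \<in> Walks (c + m) 0"
    using la lb ha ane unfolding Walks_def t_def by simp
  show "(a @ tl (rev b)) ! c = k" using la lasta ane by (simp add: nth_append last_conv_nth)
qed

lemma bij_split_walk:
  assumes cs: "c \<le> s"
  shows "bij_betw (\<lambda>xs. (take (Suc c) xs, rev (drop c xs))) {xs \<in> Walks s 0. xs ! c = k}
           (Walks c k \<times> Walks (s - c) k)"
proof (rule bij_betw_byWitness[where f' = "\<lambda>(a, b). a @ tl (rev b)"])
  show "\<forall>xs\<in>{xs \<in> Walks s 0. xs ! c = k}.
          (\<lambda>(a, b). a @ tl (rev b)) (take (Suc c) xs, rev (drop c xs)) = xs"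
  proof (intro ballI)
    fix xs :: "nat list"
    have "tl (drop c xs) = drop (Suc c) xs" by (simp add: tl_drop drop_Suc)
    then show "(\<lambda>(a, b). a @ tl (rev b)) (take (Suc c) xs, rev (drop c xs)) = xs" by simp
  qed
  show "(\<lambda>xs. (take (Suc c) xs, rev (drop c xs))) ` {xs \<in> Walks s 0. xs ! c = k}
          \<subseteq> Walks c k \<times> Walks (s - c) k"
    using Walks_take Walks_drop cs by blast
  show "\<forall>ab\<in>Walks c k \<times> Walks (s - c) k.
          (\<lambda>xs. (take (Suc c) xs, rev (drop c xs))) ((\<lambda>(a, b). a @ tl (rev b)) ab) = ab"
  proof
    fix ab assume "ab \<in> Walks c k \<times> Walks (s - c) k"
    then obtain a b where ab: "ab = (a, b)" and a: "a \<in> Walks c k" and b: "b \<in> Walks (s - c) k"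
      by blast
    have la: "length a = Suc c" and lasta: "last a = k" using a by (auto simp: Walks_def)
    have "a = butlast a @ [last a]" using la by (intro append_butlast_last_id[symmetric]) auto
    moreover have "length (butlast a) = c" using la by simp
    ultimately have "drop c a = [k]" using lasta by (metis append_eq_conv_conj)
    then have "drop c (a @ tl (rev b)) = rev b" using la Walks_rev_Cons[OF b, symmetric] by simp
    then show "(\<lambda>xs. (take (Suc c) xs, rev (drop c xs))) ((\<lambda>(a, b). a @ tl (rev b)) ab) = ab"
      using la unfolding ab by simp
  qed
  show "(\<lambda>(a, b). a @ tl (rev b)) ` (Walks c k \<times> Walks (s - c) k) \<subseteq> {xs \<in> Walks s 0. xs ! c = k}"
    using Walks_glue[where c = c and m = "s - c"] cs by auto
qed

lemma card_walks_through:
  "c \<le> s \<Longrightarrow> card {xs \<in> Walks s 0. xs ! c = k} = walk_count c k * walk_count (s - c) k"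
  using bij_betw_same_card[OF bij_split_walk] by (simp add: walk_count_def card_cartesian_product)

text \<open>The combinatorial formula: rank-weighted sizes of ideals as a convolution of walk counts.
  A column of height \<open>h\<close> contributes \<open>\<Sum>k<h. w k\<close>.\<close>

lemma ideal_sum_formula:
  "(\<Sum>I\<in>J s. \<Sum>a\<in>I. w (rho s a)) =
     (\<Sum>c\<le>s. \<Sum>h\<le>s. (\<Sum>k<h. w k) * (walk_count c h * walk_count (s - c) h))"
proof -
  have column: "(\<Sum>xs\<in>Walks s 0. W (xs ! c)) = (\<Sum>h\<le>s. W h * (walk_count c h * walk_count (s - c) h))"
    if cs: "c \<le> s" for c and W :: "nat \<Rightarrow> nat"
  proof -
    have "(\<lambda>xs. xs ! c) ` Walks s 0 \<subseteq> {..s}" using Motzkin_nth_le(1) cs by fastforce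
    then have "(\<Sum>xs\<in>Walks s 0. W (xs ! c)) = (\<Sum>h\<le>s. \<Sum>xs\<in>{xs \<in> Walks s 0. xs ! c = h}. W (xs ! c))"
      by (intro sum.group[OF finite_Walks, symmetric]) simp
    also have "\<dots> = (\<Sum>h\<le>s. W h * (walk_count c h * walk_count (s - c) h))"
      using card_walks_through[OF cs] by (simp add: mult.commute)
    finally show ?thesis .
  qed
  have "(\<Sum>I\<in>J s. \<Sum>a\<in>I. w (rho s a)) = (\<Sum>c<Suc s. \<Sum>xs\<in>Walks s 0. \<Sum>k<xs ! c. w k)"
    unfolding ideal_sum_as_walk_sum by (rule sum.swap)
  also have "\<dots> = (\<Sum>c\<le>s. \<Sum>h\<le>s. (\<Sum>k<h. w k) * (walk_count c h * walk_count (s - c) h))"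
    unfolding lessThan_Suc_atMost by (intro sum.cong refl column) simp
  finally show ?thesis .
qed

corollary f_formula: "f s = (\<Sum>c\<le>s. \<Sum>h\<le>s. h * (walk_count c h * walk_count (s - c) h))"
  using ideal_sum_formula[where w = "\<lambda>_. 1"] by (simp add: f_def)

corollary g_formula:
  "g s = (\<Sum>c\<le>s. \<Sum>h\<le>s. (\<Sum>k<h. k) * (walk_count c h * walk_count (s - c) h))"
  using ideal_sum_formula[where w = "\<lambda>k. k"] by (simp add: g_def)

section \<open>The Motzkin generating function\<close>

text \<open>The formal square root of \<open>D = 1 - 2X - 3X\<^sup>2\<close> with constant term \<open>1\<close>, and the Motzkin
  series \<open>M = (1 - X - \<surd>D) / (2 X\<^sup>2)\<close>, the root of \<open>M = 1 + X M + X\<^sup>2 M\<^sup>2\<close>.\<close>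

definition D_fps :: "real fps" where
  "D_fps = 1 - 2 * fps_X - 3 * fps_X ^ 2"

definition sqrt_D_fps :: "real fps" where
  "sqrt_D_fps = fps_radical (\<lambda>k x. sqrt x) 2 D_fps"

definition Motzkin :: "real fps" where
  "Motzkin = fps_shift 2 (fps_const (1/2) * (1 - fps_X - sqrt_D_fps))"

lemma sqrt_D_fps_square: "sqrt_D_fps ^ 2 = D_fps"
proof -
  have "fps_radical (\<lambda>k x. sqrt x) (Suc 1) D_fps ^ Suc 1 = D_fps"
    using power_radical[of D_fps "\<lambda>k x. sqrt x" 1] by (simp add: D_fps_def)
  then show ?thesis unfolding sqrt_D_fps_def by (simp add: numeral_2_eq_2)
qed

lemma sqrt_D_fps_nth: "sqrt_D_fps $ 0 = 1" "sqrt_D_fps $ 1 = -1"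
proof -
  show s0: "sqrt_D_fps $ 0 = 1" by (simp add: sqrt_D_fps_def D_fps_def)
  have "(sqrt_D_fps * sqrt_D_fps) $ 1 = D_fps $ 1" using sqrt_D_fps_square by (simp add: power2_eq_square)
  then have "2 * sqrt_D_fps $ 1 = -2" using s0 by (simp add: fps_mult_nth D_fps_def)
  then show "sqrt_D_fps $ 1 = -1" by simp
qed

lemma Motzkin_shift: "fps_X ^ 2 * Motzkin = fps_const (1/2) * (1 - fps_X - sqrt_D_fps)"
proof (rule fps_ext)
  fix n show "(fps_X ^ 2 * Motzkin) $ n = (fps_const (1/2) * (1 - fps_X - sqrt_D_fps)) $ n"
    using sqrt_D_fps_nth by (cases n; cases "n - 1") (auto simp: fps_X_power_mult_nth Motzkin_def)
qed

lemma sqrt_D_fps_eq: "sqrt_D_fps = 1 - fps_X - 2 * (fps_X ^ 2 * Motzkin)"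
proof -
  have "2 * fps_const (1/2::real) = 1" by (simp add: fps_numeral_fps_const)
  then have "2 * (fps_X ^ 2 * Motzkin) = 1 - fps_X - sqrt_D_fps"
    unfolding Motzkin_shift by (simp only: mult.assoc[symmetric]) simp
  then show ?thesis by (simp add: algebra_simps)
qed

lemma Motzkin_quadratic: "Motzkin = 1 + fps_X * Motzkin + fps_X ^ 2 * Motzkin ^ 2"
proof -
  define U where "U = fps_X ^ 2 * Motzkin"
  have "4 * (fps_X ^ 2 + fps_X * U + U ^ 2 - U) = (1 - fps_X - 2 * U) ^ 2 - D_fps"
    unfolding D_fps_def by (simp add: algebra_simps power2_eq_square)
  also have "\<dots> = 0" using sqrt_D_fps_square sqrt_D_fps_eq unfolding U_def by simp
  finally have "4 * (fps_X ^ 2 + fps_X * U + U ^ 2 - U) = (0 :: real fps)" .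
  then have "fps_X ^ 2 + fps_X * U + U ^ 2 - U = 0" by (simp only: mult_eq_0_iff) simp
  moreover have "fps_X ^ 2 * (1 + fps_X * Motzkin + fps_X ^ 2 * Motzkin ^ 2 - Motzkin)
      = fps_X ^ 2 + fps_X * U + U ^ 2 - U"
    unfolding U_def by (simp add: algebra_simps power2_eq_square)
  ultimately show ?thesis by simp
qed

lemma Motzkin_nth_0: "Motzkin $ 0 = 1"
  by (subst Motzkin_quadratic) simp

text \<open>The generating function of walks ending at height \<open>k\<close> is \<open>X\<^sup>k M\<^sup>k\<^sup>+\<^sup>1\<close>: both sides
  satisfy the last-step recurrence of \<open>walk_count\<close>.\<close>

definition walk_fps :: "nat \<Rightarrow> real fps" where
  "walk_fps k = fps_X ^ k * Motzkin ^ Suc k"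

lemma walk_fps_0: "walk_fps 0 = 1 + fps_X * (walk_fps 0 + walk_fps 1)"
proof -
  have "1 + fps_X * (walk_fps 0 + walk_fps 1) = 1 + fps_X * Motzkin + fps_X ^ 2 * Motzkin ^ 2"
    by (simp add: walk_fps_def algebra_simps power2_eq_square)
  also have "\<dots> = walk_fps 0" using Motzkin_quadratic by (simp add: walk_fps_def)
  finally show ?thesis ..
qed

lemma walk_fps_Suc:
  "walk_fps (Suc j) = fps_X * (walk_fps j + walk_fps (Suc j) + walk_fps (Suc (Suc j)))"
proof -
  have "fps_X * (walk_fps j + walk_fps (Suc j) + walk_fps (Suc (Suc j))) =
        fps_X ^ Suc j * Motzkin ^ Suc j * (1 + fps_X * Motzkin + fps_X ^ 2 * Motzkin ^ 2)"
    by (simp add: walk_fps_def algebra_simps power2_eq_square)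
  also have "\<dots> = walk_fps (Suc j)" using Motzkin_quadratic by (simp add: walk_fps_def algebra_simps)
  finally show ?thesis ..
qed

lemma walk_count_eq_nth: "real (walk_count n k) = walk_fps k $ n"
proof (induction n arbitrary: k)
  case 0
  then show ?case by (cases k) (simp_all add: walk_count_0 walk_fps_def Motzkin_nth_0)
next
  case (Suc n)
  show ?case
  proof (cases k)
    case 0
    have "walk_fps 0 $ Suc n = (walk_fps 0 + walk_fps 1) $ n"
      by (subst walk_fps_0) simp
    then show ?thesis using Suc.IH 0 by (simp add: walk_count_Suc_0)
  next
    case (Suc j)
    have "walk_fps (Suc j) $ Suc n = (walk_fps j + walk_fps (Suc j) + walk_fps (Suc (Suc j))) $ n"
      by (subst walk_fps_Suc) simp
    then show ?thesis using Suc.IH \<open>k = Suc j\<close> by (simp add: walk_count_Suc_Suc)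
  qed
qed

section \<open>Functional equations for the generating functions of \<open>f\<close> and \<open>g\<close>\<close>

text \<open>With \<open>Y = (X M)\<^sup>2\<close>, pairs of walks meeting at height \<open>h\<close> are counted by
  \<open>walk_fps h\<^sup>2 = M\<^sup>2 Y\<^sup>h\<close>.  Weighting height \<open>h\<close> by \<open>w h\<close> therefore produces
  \<open>M\<^sup>2 \<Sum>\<^sub>h w h Y\<^sup>h\<close>, which for the weights of \<open>f\<close> and \<open>g\<close> is a rational function of \<open>Y\<close>.
  Since \<open>Y\<^sup>h\<close> has order \<open>2h\<close>, all sums can be truncated.\<close>

definition Y_fps :: "real fps" where
  "Y_fps = (fps_X * Motzkin) ^ 2"

lemma walk_fps_square: "walk_fps h * walk_fps h = Motzkin ^ 2 * Y_fps ^ h"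
  by (simp add: walk_fps_def Y_fps_def power_mult[symmetric] algebra_simps power2_eq_square
      mult_2_right power_add)

lemma Y_fps_power_nth: "i < 2 * k \<Longrightarrow> (F * Y_fps ^ k) $ i = 0"
proof -
  assume "i < 2 * k"
  moreover have "F * Y_fps ^ k = fps_X ^ (2 * k) * (F * Motzkin ^ (2 * k))"
    by (simp add: Y_fps_def power_mult_distrib power_mult[symmetric] mult.commute mult.left_commute)
  ultimately show ?thesis by (simp only: fps_X_power_mult_nth) simp
qed

lemma convolution_eq_nth:
  fixes w :: "nat \<Rightarrow> real"
  assumes "s \<le> N"
  shows "(\<Sum>c\<le>s. \<Sum>h\<le>s. w h * (real (walk_count c h) * real (walk_count (s - c) h)))
           = (Motzkin ^ 2 * (\<Sum>h\<le>N. fps_const (w h) * Y_fps ^ h)) $ s"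
proof -
  have "(\<Sum>c\<le>s. \<Sum>h\<le>s. w h * (real (walk_count c h) * real (walk_count (s - c) h)))
          = (\<Sum>h\<le>s. w h * (walk_fps h * walk_fps h) $ s)"
    unfolding sum.swap[of _ "{..s}"] walk_count_eq_nth sum_distrib_left[symmetric]
    by (simp add: fps_mult_nth atLeast0AtMost)
  also have "\<dots> = (\<Sum>h\<le>N. w h * (Motzkin ^ 2 * Y_fps ^ h) $ s)"
    unfolding walk_fps_square
    by (rule sum.mono_neutral_left) (use assms Y_fps_power_nth in auto)
  also have "\<dots> = (Motzkin ^ 2 * (\<Sum>h\<le>N. fps_const (w h) * Y_fps ^ h)) $ s"
    by (simp add: sum_distrib_left fps_sum_nth algebra_simps)
  finally show ?thesis .
qed

lemma fps_mult_nth_prefix: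
  assumes "\<And>j. j \<le> n \<Longrightarrow> F1 $ j = F2 $ j"
  shows "(G * F1) $ n = (G * F2) $ n"
  unfolding fps_mult_nth using assms by (intro sum.cong refl) auto

lemma weighted_walk_series:
  fixes w :: "nat \<Rightarrow> real" and P :: "real fps" and Rem :: "nat \<Rightarrow> real fps"
  assumes trunc: "\<And>N. (1 - Y_fps) ^ r * (\<Sum>h\<le>N. fps_const (w h) * Y_fps ^ h) = P + Y_fps ^ Suc N * Rem N"
  shows "(1 - Y_fps) ^ r * Abs_fps (\<lambda>s. \<Sum>c\<le>s. \<Sum>h\<le>s.
            w h * (real (walk_count c h) * real (walk_count (s - c) h))) = Motzkin ^ 2 * P"
proof (rule fps_ext)
  fix n
  let ?S = "\<Sum>h\<le>n. fps_const (w h) * Y_fps ^ h"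
  have "((1 - Y_fps) ^ r * Abs_fps (\<lambda>s. \<Sum>c\<le>s. \<Sum>h\<le>s.
            w h * (real (walk_count c h) * real (walk_count (s - c) h)))) $ n
        = ((1 - Y_fps) ^ r * (Motzkin ^ 2 * ?S)) $ n"
    by (rule fps_mult_nth_prefix) (simp add: convolution_eq_nth)
  also have "(1 - Y_fps) ^ r * (Motzkin ^ 2 * ?S) = Motzkin ^ 2 * P + (Motzkin ^ 2 * Rem n) * Y_fps ^ Suc n"
    using trunc[of n] by (simp add: algebra_simps)
  also have "\<dots> $ n = (Motzkin ^ 2 * P) $ n"
    using Y_fps_power_nth[of n "Suc n"] by simp
  finally show "((1 - Y_fps) ^ r * Abs_fps (\<lambda>s. \<Sum>c\<le>s. \<Sum>h\<le>s.
            w h * (real (walk_count c h) * real (walk_count (s - c) h)))) $ n = (Motzkin ^ 2 * P) $ n" .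
qed

lemma truncated_sum_linear:
  "(1 - z) ^ 2 * (\<Sum>k\<le>N. of_nat k * z ^ k) =
     z + z ^ Suc N * (of_nat N * z - of_nat (Suc N))" for z :: "'a::comm_ring_1"
proof (induction N)
  case (Suc N)
  have "(1 - z) ^ 2 * (\<Sum>k\<le>Suc N. of_nat k * z ^ k) =
        z + z ^ Suc N * (of_nat N * z - of_nat (Suc N)) + (1 - z) ^ 2 * (of_nat (Suc N) * z ^ Suc N)"
    by (simp add: distrib_left Suc.IH)
  also have "\<dots> = z + z ^ Suc (Suc N) * (of_nat (Suc N) * z - of_nat (Suc (Suc N)))"
    by (simp add: algebra_simps power2_eq_square)
  finally show ?case .
qed simp

lemma truncated_sum_quadratic:
  "(1 - z) ^ 3 * (\<Sum>k\<le>N. of_nat k * (of_nat k - 1) * z ^ k) =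
     2 * z ^ 2 - z ^ Suc N * (of_nat (Suc N) * of_nat N + 2 * (of_nat N + 1) * (1 - of_nat N) * z
      + of_nat N * (of_nat N - 1) * z ^ 2)" for z :: "'a::comm_ring_1"
proof (induction N)
  case (Suc N)
  have "(1 - z) ^ 3 * (\<Sum>k\<le>Suc N. of_nat k * (of_nat k - 1) * z ^ k) =
     (2 * z ^ 2 - z ^ Suc N * (of_nat (Suc N) * of_nat N + 2 * (of_nat N + 1) * (1 - of_nat N) * z
      + of_nat N * (of_nat N - 1) * z ^ 2)) + (1 - z)^3 * (of_nat (Suc N) * (of_nat (Suc N) - 1) * z ^ Suc N)"
    by (simp add: distrib_left Suc.IH)
  also have "\<dots> = 2 * z ^ 2 - z ^ Suc (Suc N) * (of_nat (Suc (Suc N)) * of_nat (Suc N)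
      + 2 * (of_nat (Suc N) + 1) * (1 - of_nat (Suc N)) * z + of_nat (Suc N) * (of_nat (Suc N) - 1) * z ^ 2)"
    by (simp add: algebra_simps power2_eq_square power3_eq_cube)
  finally show ?case .
qed (simp add: algebra_simps power2_eq_square)

definition F_fps :: "real fps" where
  "F_fps = Abs_fps (\<lambda>s. real (f s))"

definition G_fps :: "real fps" where
  "G_fps = Abs_fps (\<lambda>s. real (g s))"

lemma F_fps_equation: "(1 - Y_fps) ^ 2 * F_fps = Motzkin ^ 2 * Y_fps"
proof -
  have trunc: "(1 - Y_fps) ^ 2 * (\<Sum>h\<le>N. fps_const (real h) * Y_fps ^ h)
      = Y_fps + Y_fps ^ Suc N * (of_nat N * Y_fps - of_nat (Suc N))" for N
    using truncated_sum_linear[of Y_fps N] by (simp add: fps_of_nat)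
  have "F_fps = Abs_fps (\<lambda>s. \<Sum>c\<le>s. \<Sum>h\<le>s. real h * (real (walk_count c h) * real (walk_count (s - c) h)))"
    by (simp add: F_fps_def f_formula)
  then show ?thesis using weighted_walk_series[OF trunc] by simp
qed

lemma G_fps_equation: "(1 - Y_fps) ^ 3 * G_fps = Motzkin ^ 2 * Y_fps ^ 2"
proof -
  define w where "w h = real h * (real h - 1)" for h
  have "fps_const (w h) = of_nat h * (of_nat h - 1)" for h
    unfolding w_def by (simp flip: fps_of_nat fps_const_1_eq_1)
  then have "(\<Sum>h\<le>N. fps_const (w h) * Y_fps ^ h) = (\<Sum>h\<le>N. of_nat h * (of_nat h - 1) * Y_fps ^ h)"
    for N by simp
  then have trunc: "(1 - Y_fps) ^ 3 * (\<Sum>h\<le>N. fps_const (w h) * Y_fps ^ h)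
      = 2 * Y_fps ^ 2 + Y_fps ^ Suc N * - (of_nat (Suc N) * of_nat N
          + 2 * (of_nat N + 1) * (1 - of_nat N) * Y_fps + of_nat N * (of_nat N - 1) * Y_fps ^ 2)" for N
    using truncated_sum_quadratic[of Y_fps N] by (simp only: mult_minus_right diff_conv_add_uminus)
  have w2: "w h = 2 * real (\<Sum>k<h. k)" for h
    unfolding w_def by (induction h) (simp_all add: algebra_simps)
  have g_real: "real (g s) = (\<Sum>c\<le>s. \<Sum>h\<le>s.
      real (\<Sum>k<h. k) * (real (walk_count c h) * real (walk_count (s - c) h)))" for s
    by (simp only: g_formula of_nat_sum[where A = "{..s}"] of_nat_mult)
  have "Abs_fps (\<lambda>s. \<Sum>c\<le>s. \<Sum>h\<le>s. w h * (real (walk_count c h) * real (walk_count (s - c) h)))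
      = 2 * G_fps"
    by (intro fps_ext) (simp only: fps_nth_Abs_fps G_fps_def g_real w2 sum_distrib_left mult.assoc
        fps_numeral_fps_const fps_mult_left_const_nth)
  then have "2 * ((1 - Y_fps) ^ 3 * G_fps) = 2 * (Motzkin ^ 2 * Y_fps ^ 2)"
    using weighted_walk_series[OF trunc] by (simp add: mult.left_commute)
  then show ?thesis by simp
qed

section \<open>Convergence for \<open>|x| < 1/3\<close>\<close>

text \<open>Coefficients of size \<open>O(n\<^sup>4 3\<^sup>n)\<close> give radius at least \<open>1/3\<close>: they are dominated by
  the coefficients of the fourth derivative of \<open>\<Sum> 3\<^sup>n X\<^sup>n\<close>.\<close>

lemma fps_conv_radius_geometric_third: "fps_conv_radius (Abs_fps (\<lambda>n. 3 ^ n) :: real fps) \<ge> ereal (1/3)"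
  unfolding fps_conv_radius_def
proof (rule conv_radius_geI_ex')
  fix r :: real assume "0 < r" "ereal r < ereal (1/3)"
  then have "summable (\<lambda>n. (3 * r) ^ n)" by (intro summable_geometric) auto
  then show "summable (\<lambda>n. (Abs_fps (\<lambda>n. 3 ^ n) :: real fps) $ n * of_real r ^ n)"
    by (simp add: power_mult_distrib)
qed

lemma conv_radius_ge_third:
  fixes a :: "nat \<Rightarrow> real"
  assumes bound: "\<And>n. \<bar>a n\<bar> \<le> real ((n + 1) ^ 4 * 3 ^ n)"
  shows "conv_radius a \<ge> ereal (1/3)"
proof (rule conv_radius_geI_ex')
  fix r :: real assume r: "0 < r" "ereal r < ereal (1/3)"
  define G :: "real fps" where "G = fps_deriv (fps_deriv (fps_deriv (fps_deriv (Abs_fps (\<lambda>n. 3 ^ n)))))"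
  have "fps_conv_radius G \<ge> ereal (1/3)"
    unfolding G_def by (meson fps_conv_radius_geometric_third fps_conv_radius_deriv order_trans)
  then have "ereal (norm r) < fps_conv_radius G" using r less_le_trans[OF r(2)] by simp
  then have summable: "summable (\<lambda>n. G $ n * r ^ n)" by (rule summable_fps)
  have G_ge: "real ((n + 1) ^ 4 * 3 ^ n) \<le> G $ n" for n
  proof -
    let ?a = "n + 1" and ?b = "n + 1 + 1" and ?c = "n + 1 + 1 + 1" and ?d = "n + 1 + 1 + 1 + 1"
    have "(n + 1) ^ 4 * 3 ^ n = ?a * (?a * (?a * (?a * 3 ^ n)))"
      by (simp only: power4_eq_xxxx mult.assoc)
    also have "\<dots> \<le> ?a * (?b * (?c * (?d * 3 ^ ?d)))"
      by (intro mult_le_mono order.refl power_increasing) auto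
    finally have "real ((n + 1) ^ 4 * 3 ^ n) \<le> real (?a * (?b * (?c * (?d * 3 ^ ?d))))"
      by (simp only: of_nat_le_iff)
    also have "\<dots> = G $ n"
      by (simp only: G_def fps_deriv_nth fps_nth_Abs_fps of_nat_mult of_nat_power of_nat_numeral)
    finally show ?thesis .
  qed
  show "summable (\<lambda>n. a n * of_real r ^ n)"
  proof (rule summable_comparison_test'[OF summable])
    fix n
    show "norm (a n * of_real r ^ n) \<le> G $ n * r ^ n"
      using bound[of n] G_ge[of n] r by (simp add: abs_mult mult_right_mono)
  qed
qed

text \<open>Crude bound on the convolution sums: at most \<open>(s + 1)\<^sup>2\<close> terms, walk counts \<open>\<le> 3\<^sup>n\<close>.\<close>

lemma convolution_le:
  assumes "\<And>h. h \<le> s \<Longrightarrow> W h \<le> (s + 1) ^ 2"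
  shows "(\<Sum>c\<le>s. \<Sum>h\<le>s. W h * (walk_count c h * walk_count (s - c) h)) \<le> (s + 1) ^ 4 * 3 ^ s"
proof -
  have "walk_count c h * walk_count (s - c) h \<le> 3 ^ s" if "c \<le> s" for c h
  proof -
    have "walk_count c h * walk_count (s - c) h \<le> 3 ^ c * 3 ^ (s - c)"
      by (intro mult_le_mono walk_count_le)
    also have "\<dots> = 3 ^ s" using that by (simp flip: power_add)
    finally show ?thesis .
  qed
  then have "(\<Sum>c\<le>s. \<Sum>h\<le>s. W h * (walk_count c h * walk_count (s - c) h))
      \<le> (\<Sum>c\<le>s. \<Sum>h\<le>s. (s + 1) ^ 2 * 3 ^ s)"
    using assms by (intro sum_mono mult_le_mono) auto
  also have "\<dots> = (s + 1) * ((s + 1) * ((s + 1) ^ 2 * 3 ^ s))" by simp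
  also have "\<dots> = (s + 1) ^ 4 * 3 ^ s" by (simp only: power2_eq_square power4_eq_xxxx mult.assoc)
  finally show ?thesis .
qed

definition radius_third :: "real fps \<Rightarrow> bool" where
  "radius_third F \<longleftrightarrow> ereal (1/3) \<le> fps_conv_radius F"

lemma radius_third_intros:
  "radius_third 1" "radius_third fps_X"
  "radius_third F \<Longrightarrow> radius_third G \<Longrightarrow> radius_third (F + G)"
  "radius_third F \<Longrightarrow> radius_third G \<Longrightarrow> radius_third (F - G)"
  "radius_third F \<Longrightarrow> radius_third G \<Longrightarrow> radius_third (F * G)"
  "radius_third F \<Longrightarrow> radius_third (F ^ n)"
  unfolding radius_third_def
  using fps_conv_radius_add[of F G] fps_conv_radius_diff[of F G] fps_conv_radius_mult[of F G]
    fps_conv_radius_power[of F n] by (auto intro: order_trans min.boundedI)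

lemma radius_third_bound:
  assumes "\<And>n. \<bar>F $ n\<bar> \<le> real ((n + 1) ^ 4 * 3 ^ n)"
  shows "radius_third F"
  unfolding radius_third_def fps_conv_radius_def by (rule conv_radius_ge_third[OF assms])

lemma radius_third_Motzkin: "radius_third Motzkin"
proof (rule radius_third_bound)
  fix n
  have "Motzkin $ n = real (walk_count n 0)" using walk_count_eq_nth[of n 0] by (simp add: walk_fps_def)
  moreover have "walk_count n 0 \<le> (n + 1) ^ 4 * 3 ^ n"
    using walk_count_le[of n 0] by (metis le_trans mult_le_mono1 mult_1 one_le_power le_add2)
  ultimately show "\<bar>Motzkin $ n\<bar> \<le> real ((n + 1) ^ 4 * 3 ^ n)"
    by (simp only: abs_of_nat of_nat_le_iff)
qed

lemma radius_third_Y: "radius_third Y_fps"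
  unfolding Y_fps_def by (intro radius_third_intros radius_third_Motzkin)

lemma radius_third_F: "radius_third F_fps"
proof (rule radius_third_bound)
  fix s
  have "f s \<le> (s + 1) ^ 4 * 3 ^ s"
    unfolding f_formula by (rule convolution_le) (simp add: power2_eq_square)
  then show "\<bar>F_fps $ s\<bar> \<le> real ((s + 1) ^ 4 * 3 ^ s)"
    by (simp only: F_fps_def fps_nth_Abs_fps abs_of_nat of_nat_le_iff)
qed

lemma radius_third_G: "radius_third G_fps"
proof (rule radius_third_bound)
  fix s
  have "(\<Sum>k<h. k) \<le> (s + 1) ^ 2" if "h \<le> s" for h :: nat
  proof -
    have "(\<Sum>k<h. k) \<le> h * h" using sum_bounded_above[of "{..<h}" "\<lambda>k. k" h] by simp
    also have "\<dots> \<le> (s + 1) * (s + 1)" using that by (intro mult_le_mono) auto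
    also have "\<dots> = (s + 1) ^ 2" by (simp only: power2_eq_square)
    finally show ?thesis .
  qed
  then have "g s \<le> (s + 1) ^ 4 * 3 ^ s" unfolding g_formula by (rule convolution_le)
  then show "\<bar>G_fps $ s\<bar> \<le> real ((s + 1) ^ 4 * 3 ^ s)"
    by (simp only: G_fps_def fps_nth_Abs_fps abs_of_nat of_nat_le_iff)
qed

lemma radius_third_norm:
  "radius_third F \<Longrightarrow> \<bar>t :: real\<bar> < 1/3 \<Longrightarrow> ereal (norm t) < fps_conv_radius F"
  unfolding radius_third_def by (rule less_le_trans[rotated]) auto

lemma eval_fps_third:
  fixes t :: real
  assumes "radius_third F" "radius_third G" "\<bar>t\<bar> < 1/3"
  shows "eval_fps (F + G) t = eval_fps F t + eval_fps G t"
    "eval_fps (F - G) t = eval_fps F t - eval_fps G t"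
    "eval_fps (F * G) t = eval_fps F t * eval_fps G t"
  using assms radius_third_norm by (auto intro!: eval_fps_add eval_fps_diff eval_fps_mult)

lemma eval_fps_power_third:
  fixes t :: real
  shows "radius_third F \<Longrightarrow> \<bar>t\<bar> < 1/3 \<Longrightarrow> eval_fps (F ^ n) t = eval_fps F t ^ n"
  using radius_third_norm by (auto intro!: eval_fps_power)

section \<open>Evaluation at a real point\<close>

lemma Motzkin_eval_quadratic:
  fixes t :: real
  assumes t: "\<bar>t\<bar> < 1/3"
  shows "eval_fps Motzkin t = 1 + t * eval_fps Motzkin t + t ^ 2 * eval_fps Motzkin t ^ 2"
proof -
  have "eval_fps Motzkin t = eval_fps (1 + fps_X * Motzkin + fps_X ^ 2 * Motzkin ^ 2) t"
    using Motzkin_quadratic by metis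
  also have "\<dots> = 1 + t * eval_fps Motzkin t + t ^ 2 * eval_fps Motzkin t ^ 2"
    using t by (simp add: eval_fps_third eval_fps_power_third radius_third_intros radius_third_Motzkin)
  finally show ?thesis .
qed

text \<open>The root \<open>1 - t - 2t\<^sup>2 M(t)\<close> of \<open>D\<close> is the positive square root: it is continuous,
  equals \<open>1\<close> at \<open>0\<close>, and cannot vanish because \<open>D > 0\<close> on \<open>|t| < 1/3\<close>.\<close>

lemma D_pos: "\<bar>t\<bar> < 1/3 \<Longrightarrow> D t > 0"
proof -
  assume t: "\<bar>t\<bar> < 1/3"
  have "D t = (1 - 3 * t) * (1 + t)" unfolding D_def by (simp add: algebra_simps power2_eq_square)
  moreover have "1 - 3 * t > 0" "1 + t > 0" using t by auto
  ultimately show ?thesis by simp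
qed

lemma sqrt_D_eval:
  fixes x :: real
  assumes x: "\<bar>x\<bar> < 1/3"
  shows "sqrt (D x) = 1 - x - 2 * x ^ 2 * eval_fps Motzkin x"
proof -
  define \<phi> where "\<phi> t = 1 - t - 2 * t ^ 2 * eval_fps Motzkin t" for t :: real
  have sq: "\<phi> t ^ 2 = D t" if "\<bar>t\<bar> < 1/3" for t
  proof -
    define m where "m = eval_fps Motzkin t"
    have "\<phi> t ^ 2 - D t = 4 * t ^ 2 * (1 + t * m + t ^ 2 * m ^ 2 - m)"
      unfolding \<phi>_def D_def m_def[symmetric] by (simp add: algebra_simps power2_eq_square)
    also have "\<dots> = 0" using Motzkin_eval_quadratic[OF that] unfolding m_def by simp
    finally show ?thesis by simp
  qed
  have cont: "continuous_on {a..b} \<phi>" if "\<bar>a\<bar> < 1/3" "\<bar>b\<bar> < 1/3" for a b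
  proof -
    have "{a..b} \<subseteq> eball 0 (fps_conv_radius Motzkin)"
      using that radius_third_norm[OF radius_third_Motzkin] by (auto simp: dist_norm)
    then show ?thesis unfolding \<phi>_def
      by (intro continuous_intros continuous_on_subset[OF continuous_on_eval_fps]) auto
  qed
  have "\<phi> x > 0"
  proof (rule ccontr)
    assume "\<not> \<phi> x > 0"
    moreover have "\<phi> 0 = 1" by (simp add: \<phi>_def)
    ultimately obtain z where "\<bar>z\<bar> \<le> \<bar>x\<bar>" "\<phi> z = 0"
      using IVT2'[of \<phi> x 0 0] IVT'[of \<phi> x 0 0] cont[of 0 x] cont[of x 0] x
      by (cases "0 \<le> x") (force, force)
    then show False using sq[of z] D_pos[of z] x by simp
  qed
  then show ?thesis using sq[OF x] unfolding \<phi>_def[symmetric]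
    by (intro real_sqrt_unique) auto
qed

lemma eval_functional_equation:
  fixes x :: real
  assumes eq: "(1 - Y_fps) ^ r * H = Motzkin ^ 2 * Y_fps ^ j"
    and H: "radius_third H" and x: "\<bar>x\<bar> < 1/3"
  shows "(1 - x ^ 2 * eval_fps Motzkin x ^ 2) ^ r * eval_fps H x
           = eval_fps Motzkin x ^ 2 * (x ^ 2 * eval_fps Motzkin x ^ 2) ^ j"
proof -
  have Y: "eval_fps Y_fps x = x ^ 2 * eval_fps Motzkin x ^ 2"
    unfolding Y_fps_def using x
    by (simp add: eval_fps_third eval_fps_power_third radius_third_intros radius_third_Motzkin power_mult_distrib)
  have "eval_fps ((1 - Y_fps) ^ r * H) x = eval_fps (Motzkin ^ 2 * Y_fps ^ j) x"
    using eq by simp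
  then show ?thesis using x H Y
    by (simp add: eval_fps_third eval_fps_power_third radius_third_intros radius_third_Motzkin radius_third_Y)
qed

text \<open>With \<open>m = M(x)\<close> and \<open>S = \<surd>D(x) = 1 - x - 2x\<^sup>2m\<close> the quadratic equation for \<open>m\<close> gives
  \<open>1 - x\<^sup>2m\<^sup>2 = m S\<close>, which turns the evaluated functional equations into the closed forms.\<close>

lemma Motzkin_eval_facts:
  fixes x :: real
  defines "m \<equiv> eval_fps Motzkin x"
  assumes x: "\<bar>x\<bar> < 1/3"
  shows "m \<noteq> 0" "sqrt (D x) > 0" "1 - x ^ 2 * m ^ 2 = m * sqrt (D x)"
    "-1 + x + sqrt (D x) = - 2 * x ^ 2 * m"
proof -
  have q: "m = 1 + x * m + x ^ 2 * m ^ 2" unfolding m_def by (rule Motzkin_eval_quadratic[OF x])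
  then show "m \<noteq> 0" by auto
  show "sqrt (D x) > 0" using D_pos[OF x] by simp
  have S: "sqrt (D x) = 1 - x - 2 * x ^ 2 * m" unfolding m_def by (rule sqrt_D_eval[OF x])
  then show "-1 + x + sqrt (D x) = - 2 * x ^ 2 * m" by simp
  have "1 - x ^ 2 * m ^ 2 - m * sqrt (D x) = (1 + x * m + x ^ 2 * m ^ 2) - m"
    unfolding S by (simp add: algebra_simps power2_eq_square)
  then show "1 - x ^ 2 * m ^ 2 = m * sqrt (D x)" using q by simp
qed

lemma F_fps_eval:
  fixes x :: real
  assumes "x \<noteq> 0" "\<bar>x\<bar> < 1/3"
  shows "eval_fps F_fps x = (-1 + x + sqrt (D x))^2 / (4 * x^2 * D x)"
proof -
  define m S where "m = eval_fps Motzkin x" and "S = sqrt (D x)"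
  note facts = Motzkin_eval_facts[OF assms(2), folded m_def S_def]
  have eq: "(1 - Y_fps) ^ 2 * F_fps = Motzkin ^ 2 * Y_fps ^ 1" using F_fps_equation by simp
  have "(m * S) ^ 2 * eval_fps F_fps x = m ^ 2 * (x ^ 2 * m ^ 2)"
    using eval_functional_equation[OF eq radius_third_F assms(2)]
    unfolding m_def[symmetric] facts(3) by simp
  then have "S ^ 2 * eval_fps F_fps x = x ^ 2 * m ^ 2"
    using facts(1) by (simp add: algebra_simps power2_eq_square)
  moreover have "D x = S ^ 2" using D_pos[OF assms(2)] unfolding S_def by simp
  ultimately show ?thesis
    using facts(1,2) assms(1) unfolding S_def[symmetric] facts(4)
    by (simp add: field_simps power2_eq_square)
qed

lemma G_fps_eval:
  fixes x :: real
  assumes "x \<noteq> 0" "\<bar>x\<bar> < 1/3"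
  shows "eval_fps G_fps x = - ((-1 + x + sqrt (D x))^3) / (8 * x^2 * (D x) powr (3/2))"
proof -
  define m S where "m = eval_fps Motzkin x" and "S = sqrt (D x)"
  note facts = Motzkin_eval_facts[OF assms(2), folded m_def S_def]
  have "(m * S) ^ 3 * eval_fps G_fps x = m ^ 2 * (x ^ 2 * m ^ 2) ^ 2"
    using eval_functional_equation[OF G_fps_equation radius_third_G assms(2)]
    unfolding m_def[symmetric] facts(3) by simp
  then have "S ^ 3 * eval_fps G_fps x = x ^ 4 * m ^ 3"
    using facts(1)
    by (simp add: algebra_simps power2_eq_square power3_eq_cube power4_eq_xxxx)
  moreover have "D x powr (3/2) = S ^ 3"
  proof -
    have "D x = S ^ 2" using D_pos[OF assms(2)] unfolding S_def by simp
    then have "D x powr (3/2) = (S powr 2) powr (3/2)" using facts(2) by simp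
    also have "\<dots> = S powr 3" by (simp add: powr_powr)
    also have "\<dots> = S ^ 3" using facts(2) by simp
    finally show ?thesis .
  qed
  ultimately show ?thesis
    using facts(1,2) assms(1) unfolding S_def[symmetric] facts(4)
    by (simp add: field_simps eval_nat_numeral)
qed

theorem mainTheorem11:
  fixes x :: real
  assumes "x \<noteq> 0" and "\<bar>x\<bar> < 1/3"
  shows "((\<lambda>s. real (f s) * x ^ s) sums ((-1 + x + sqrt (D x))^2 / (4 * x^2 * D x))) \<and>
         ((\<lambda>s. real (g s) * x ^ s) sums
           (- ((-1 + x + sqrt (D x))^3) / (8 * x^2 * (D x) powr (3/2))))"
proof
  have "(\<lambda>s. F_fps $ s * x ^ s) sums eval_fps F_fps x"
    by (rule sums_eval_fps[OF radius_third_norm[OF radius_third_F assms(2)]])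
  then show "(\<lambda>s. real (f s) * x ^ s) sums ((-1 + x + sqrt (D x))^2 / (4 * x^2 * D x))"
    using F_fps_eval[OF assms] by (simp add: F_fps_def)
  have "(\<lambda>s. G_fps $ s * x ^ s) sums eval_fps G_fps x"
    by (rule sums_eval_fps[OF radius_third_norm[OF radius_third_G assms(2)]])
  then show "(\<lambda>s. real (g s) * x ^ s) sums (- ((-1 + x + sqrt (D x))^3) / (8 * x^2 * (D x) powr (3/2)))"
    using G_fps_eval[OF assms] by (simp add: G_fps_def)
qed

end
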